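(* Consider the data model $\boldsymbol x=\boldsymbol f(\boldsymbol s)$ and the J-VolMax problem. Assume there is a finite set $\mathcal{S}_N=\{\boldsymbol s^{(1)},\dots,\boldsymbol s^{(N)}\}\subset\mathcal{S}$, with $\boldsymbol x^{(n)}=\boldsymbol f(\boldsymbol s^{(n)})$, such that the SDI condition holds at each $\boldsymbol s^{(n)}$. Let $\widehat{\boldsymbol g}\in\mathcal{G}$ be the optimal encoder learned by J-VolMax, and suppose $$\widehat{\boldsymbol g}(\boldsymbol x^{(n)})=\widehat{\boldsymbol\Pi}(\boldsymbol s^{(n)})\widehat{\boldsymbol\rho}(\boldsymbol s^{(n)}),\quad\forall\boldsymbol s^{(n)}\in\mathcal{S}_N,$$ for permutation matrices $\widehat{\boldsymbol\Pi}(\boldsymbol s^{(n)})\in\mathcal{P}_d$ possibly depending on $\boldsymbol s^{(n)}$ and a map $\widehat{\boldsymbol\rho}(\boldsymbol s)=(\widehat\rho_1(s_1),\dots,\widehat\rho_d(s_d))$ of invertible component-wise transformations. Suppose moreover: 1. $\boldsymbol f,\widehat{\boldsymbol g},\widehat{\boldsymbol\rho}$ are Lipschitz continuous with constants $L_{\boldsymbol f},L_{\widehat{\boldsymbol g}},L_{\widehat{\boldsymbol\rho}}>0$; 2. there is $\gamma>0$ such that for every $\boldsymbol\Pi\in\mathcal{P}_d$ with $\boldsymbol\Pi\ne\widehat{\boldsymbol\Pi}(\boldsymbol s^{(n)})$, $\|\widehat{\boldsymbol g}(\boldsymbol x^{(n)})-\boldsymbol\Pi\widehat{\boldsymbol\rho}(\boldsymbol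 s^{(n)})\|_2\ge\gamma$ for all $n\in[N]$; 3. with $\mathcal{N}^{(n)}=\{\boldsymbol s\in\mathcal{S}:\|\boldsymbol s-\boldsymbol s^{(n)}\|_2<r^{(n)}\}$ where $r^{(n)}<\frac{\gamma}{2(L_{\boldsymbol f}L_{\widehat{\boldsymbol g}}+L_{\widehat{\boldsymbol\rho}})}$, the union $\mathcal{N}=\bigcup_{n=1}^N\mathcal{N}^{(n)}$ is a connected subset of $\mathcal{S}$. Then $\widehat{\boldsymbol\Pi}(\boldsymbol s^{(n)})=\widehat{\boldsymbol\Pi}$ for a single fixed $\widehat{\boldsymbol\Pi}\in\mathcal{P}_d$, and consequently $\widehat{\boldsymbol g}(\boldsymbol x^{(n)})=\widehat{\boldsymbol\Pi}\widehat{\boldsymbol\rho}(\boldsymbol s^{(n)})$ for all $n\in[N]$.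
   Context: Data model: $\boldsymbol{s}\in\mathbb{R}^d$ is a random vector with distribution $p(\boldsymbol{s})$ and support $\mathcal{S}\subseteq\mathbb{R}^d$; $\boldsymbol{f}=(f_1,\dots,f_m):\mathbb{R}^d\to\mathbb{R}^m$ with $m\ge d$ is an unknown diffeomorphism mapping $\mathcal{S}$ onto a $d$-dimensional manifold $\mathcal{X}\subset\mathbb{R}^m$, and $\boldsymbol{x}=\boldsymbol{f}(\boldsymbol{s})$. $\boldsymbol{J}_{\boldsymbol f}(\boldsymbol s)\in\mathbb{R}^{m\times d}$ has entries $\partial f_i/\partial s_j$; its $i$-th row is $\nabla f_i(\boldsymbol s)^\top$. $\mathcal{P}_d$ denotes the set of $d\times d$ permutation matrices. Convex geometry: for $\boldsymbol{w}(\boldsymbol s)$ with positive entries, $\mathcal{B}_1^{\boldsymbol w(\boldsymbol s)}=\{\boldsymbol y\in\mathbb{R}^d:\sum_k |y_k|/w_k(\boldsymbol s)\le 1\}$, and $\mathcal{B}_\infty^{\boldsymbol w(\boldsymbol s)}$ denotes its polar $\{\boldsymbol y:\max_k w_k(\boldsymbol s)|y_k|\le1\}$, with extreme points $(\pm w_1(\boldsymbol s)^{-1},\dots,\pm w_d(\boldsymbol s)^{-1})$. For a bounded convex set $P$: $\mathcal{E}(P)$ is its maximum-volume inscribed ellipsoid, $P^*=\{\boldsymbol x:\boldsymbol x^\top\boldsymbol y\le1\ \forall\boldsymbol y\in P\}$, ${\rm bd}(P)$ its boundary, ${\rm extr}(P)$ its extreme points; ${\rm conv}$ is convex hull. SDI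 condition at $\boldsymbol s$: there is $\boldsymbol w(\boldsymbol s)$ with positive entries such that $\nabla f_1(\boldsymbol s),\dots,\nabla f_m(\boldsymbol s)\in\mathcal{B}_1^{\boldsymbol w(\boldsymbol s)}$ and (1) $\mathcal{E}(\mathcal{B}_1^{\boldsymbol w(\boldsymbol s)})\subseteq{\rm conv}\{\nabla f_i(\boldsymbol s)\}_{i=1}^m\subseteq\mathcal{B}_1^{\boldsymbol w(\boldsymbol s)}$; (2) ${\rm conv}\{\nabla f_i(\boldsymbol s)\}_{i=1}^m{}^*\cap{\rm bd}(\mathcal{E}(\mathcal{B}_1^{\boldsymbol w(\boldsymbol s)})^* )={\rm extr}(\mathcal{B}_\infty^{\boldsymbol w(\boldsymbol s)})$. J-VolMax: with decoder $\boldsymbol f_{\boldsymbol\theta}:\mathbb{R}^d\to\mathbb{R}^m$, encoder $\boldsymbol g_{\boldsymbol\phi}:\mathbb{R}^m\to\mathbb{R}^d$ from a class $\mathcal{G}$, and constant $C>0$: maximize $\mathbb{E}[\log\det(\boldsymbol J_{\boldsymbol f_{\boldsymbol\theta}}(\boldsymbol g_{\boldsymbol\phi}(\boldsymbol x))^\top\boldsymbol J_{\boldsymbol f_{\boldsymbol\theta}}(\boldsymbol g_{\boldsymbol\phi}(\boldsymbol x)))]$ subject to $\|[\boldsymbol J_{\boldsymbol f_{\boldsymbol\theta}}(\boldsymbol g_{\boldsymbol\phi}(\boldsymbol x))]_{i,:}\|_1\le C$ for all $i\in[m]$ and $\boldsymbol x=\boldsymbol f_{\boldsymbol\theta}(\boldsymbol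 g_{\boldsymbol\phi}(\boldsymbol x))$ for all $\boldsymbol x\in\mathcal{X}$. *)

theory Defs
  imports "HOL-Analysis.Analysis" "HOL-Probability.Probability"
begin

(* Jacobian J_f(s) in R^{m x d}: entry (i,j) is  d f_i / d s_j *)
definition jac :: "(real^'d \<Rightarrow> real^'m) \<Rightarrow> real^'d \<Rightarrow> real^'d^'m" where
  "jac f s = matrix (frechet_derivative f (at s))"

definition grad_comp :: "(real^'d \<Rightarrow> real^'m) \<Rightarrow> 'm \<Rightarrow> real^'d \<Rightarrow> real^'d" where
  "grad_comp f i s = (jac f s) $ i"

definition perm_matrices :: "(real^'d^'d) set" where
  "perm_matrices = {P. \<exists>p. p permutes (UNIV :: 'd set) \<and>
                        P = (\<chi> i j. if j = p i then 1 else 0)}"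

definition wB1 :: "real^'d \<Rightarrow> (real^'d) set" where
  "wB1 w = {y. (\<Sum>k\<in>UNIV. \<bar>y $ k\<bar> / w $ k) \<le> 1}"

definition wBinf :: "real^'d \<Rightarrow> (real^'d) set" where
  "wBinf w = {y. \<forall>k. w $ k * \<bar>y $ k\<bar> \<le> 1}"

definition polar :: "('a::real_inner) set \<Rightarrow> 'a set" where
  "polar P = {x. \<forall>y\<in>P. inner x y \<le> 1}"

definition is_ellipsoid :: "(real^'d) set \<Rightarrow> bool" where
  "is_ellipsoid E \<longleftrightarrow> (\<exists>(A::real^'d^'d) c. invertible A \<and> E = (\<lambda>u. c + A *v u) ` cball 0 1)"

definition mvie :: "(real^'d) set \<Rightarrow> (real^'d) set" where
  "mvie P = (THE E. is_ellipsoid E \<and> E \<subseteq> P \<and>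
      (\<forall>E'. is_ellipsoid E' \<and> E' \<subseteq> P \<longrightarrow> measure lborel E' \<le> measure lborel E))"

definition SDI :: "(real^'d \<Rightarrow> real^'m) \<Rightarrow> real^'d \<Rightarrow> bool" where
  "SDI f s \<longleftrightarrow> (\<exists>w::real^'d. (\<forall>k. 0 < w $ k) \<and>
      (\<forall>i. grad_comp f i s \<in> wB1 w) \<and>
      mvie (wB1 w) \<subseteq> convex hull (range (\<lambda>i. grad_comp f i s)) \<and>
      convex hull (range (\<lambda>i. grad_comp f i s)) \<subseteq> wB1 w \<and>
      polar (convex hull (range (\<lambda>i. grad_comp f i s))) \<inter> frontier (polar (mvie (wB1 w)))
        = {y. y extreme_point_of (wBinf w)})"

definition jvolmax_obj ::
  "(real^'d) measure \<Rightarrow> (real^'d \<Rightarrow> real^'m) \<Rightarrow> (real^'d \<Rightarrow> real^'m) \<Rightarrow> (real^'m \<Rightarrow> real^'d) \<Rightarrow> real" where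
  "jvolmax_obj P f ft gp =
     (\<integral>s. ln (det (transpose (jac ft (gp (f s))) ** jac ft (gp (f s)))) \<partial>P)"

definition jvolmax_feasible ::
  "(real^'d) measure \<Rightarrow> (real^'d \<Rightarrow> real^'m) \<Rightarrow> (real^'d) set \<Rightarrow> (real^'m \<Rightarrow> real^'d) set \<Rightarrow> real
     \<Rightarrow> (real^'d \<Rightarrow> real^'m) \<Rightarrow> (real^'m \<Rightarrow> real^'d) \<Rightarrow> bool" where
  "jvolmax_feasible P f S G C ft gp \<longleftrightarrow>
     gp \<in> G \<and> (\<forall>z. ft differentiable (at z)) \<and>
     integrable P (\<lambda>s. ln (det (transpose (jac ft (gp (f s))) ** jac ft (gp (f s))))) \<and>
     (\<forall>x\<in>f ` S. \<forall>i. (\<Sum>j\<in>UNIV. \<bar>jac ft (gp x) $ i $ j\<bar>) \<le> C) \<and>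
     (\<forall>x\<in>f ` S. ft (gp x) = x)"

definition jvolmax_optimal_encoder ::
  "(real^'d) measure \<Rightarrow> (real^'d \<Rightarrow> real^'m) \<Rightarrow> (real^'d) set \<Rightarrow> (real^'m \<Rightarrow> real^'d) set \<Rightarrow> real
     \<Rightarrow> (real^'m \<Rightarrow> real^'d) \<Rightarrow> bool" where
  "jvolmax_optimal_encoder P f S G C gp \<longleftrightarrow>
     (\<exists>ft. jvolmax_feasible P f S G C ft gp \<and>
        (\<forall>ft' gp'. jvolmax_feasible P f S G C ft' gp' \<longrightarrow>
            jvolmax_obj P f ft' gp' \<le> jvolmax_obj P f ft gp))"

definition cw_map :: "('d \<Rightarrow> real \<Rightarrow> real) \<Rightarrow> real^'d \<Rightarrow> real^'d" where
  "cw_map \<rho> s = (\<chi> k. \<rho> k (s $ k))"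

end

theory Submission
  imports Defs
begin

(* Since ghat o f and rho
   are Lipschitz, the permutation of one anchor still represents the encoder output at another anchor
   up to an error (Lf Lg + Lrho) times their distance. Anchors whose neighbourhoods overlap are closer
   than gamma / (Lf Lg + Lrho), so this error is below gamma and the separation hypothesis forces their
   permutations to coincide. A label that agrees on overlapping open sets is constant on their
   connected union. *)

lemma norm_perm_matrix_mult:
  assumes "Q \<in> (perm_matrices :: (real^'d^'d) set)"
  shows "norm (Q *v x) = norm x"
proof -
  obtain p where p: "p permutes (UNIV::'d set)" and Q: "Q = (\<chi> i j. if j = p i then 1 else 0)"
    using assms unfolding perm_matrices_def by blast
  have Qx: "Q *v x = (\<chi> i. x $ p i)"
    unfolding Q matrix_vector_mult_def
    by (simp add: vec_eq_iff if_distrib[where f="\<lambda>a. a * _"] cong: if_cong)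
  have "(\<Sum>i\<in>UNIV. (x $ p i)\<^sup>2) = (\<Sum>i\<in>UNIV. (x $ i)\<^sup>2)"
    using sum.reindex[of p UNIV "\<lambda>i. (x $ i)\<^sup>2"] permutes_inj[OF p] permutes_image[OF p]
    by (simp add: o_def)
  then show ?thesis
    unfolding Qx norm_eq_sqrt_inner inner_vec_def by (simp add: power2_eq_square)
qed

lemma mat_1_in_perm_matrices: "mat 1 \<in> perm_matrices"
proof -
  have "mat 1 = (\<chi> i j. if j = id i then 1 else 0)"
    by (simp add: mat_def vec_eq_iff eq_commute)
  then show ?thesis
    unfolding perm_matrices_def using permutes_id by blast
qed

lemma perm_representation_error_le:
  fixes h \<rho> :: "'a::metric_space \<Rightarrow> real^'d"
  assumes "Lh-lipschitz_on A h" "L\<rho>-lipschitz_on A \<rho>" "a \<in> A" "b \<in> A"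
    and "Q \<in> perm_matrices" "h b = Q *v \<rho> b"
  shows "norm (h a - Q *v \<rho> a) \<le> (Lh + L\<rho>) * dist a b"
proof -
  have "h a - Q *v \<rho> a = (h a - h b) + Q *v (\<rho> b - \<rho> a)"
    using assms(6) by (simp add: matrix_vector_mult_diff_distrib)
  then have "norm (h a - Q *v \<rho> a) \<le> norm (h a - h b) + norm (Q *v (\<rho> b - \<rho> a))"
    by (simp only: norm_triangle_ineq)
  also have "\<dots> = dist (h a) (h b) + dist (\<rho> a) (\<rho> b)"
    by (simp add: norm_perm_matrix_mult[OF assms(5)] dist_norm norm_minus_commute)
  also have "\<dots> \<le> Lh * dist a b + L\<rho> * dist a b"
    by (intro add_mono lipschitz_onD[OF assms(1)] lipschitz_onD[OF assms(2)] assms(3,4))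
  finally show ?thesis
    by (simp add: distrib_right)
qed

lemma connected_Union_label_const:
  fixes B :: "'i \<Rightarrow> 'a::topological_space set"
  assumes conn: "connected (\<Union>k\<in>I. T \<inter> B k)"
    and opn: "\<And>k. k \<in> I \<Longrightarrow> open (B k)"
    and nonempty: "\<And>k. k \<in> I \<Longrightarrow> T \<inter> B k \<noteq> {}"
    and agree: "\<And>k l. k \<in> I \<Longrightarrow> l \<in> I \<Longrightarrow> T \<inter> B k \<inter> B l \<noteq> {} \<Longrightarrow> lbl k = lbl l"
    and "i \<in> I" "j \<in> I"
  shows "lbl i = lbl j"
proof (rule ccontr)
  assume ne: "lbl i \<noteq> lbl j"
  define U where "U = (\<Union>k\<in>I. T \<inter> B k)"
  define Same where "Same = (\<Union>k\<in>{k\<in>I. lbl k = lbl i}. B k)"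
  define Other where "Other = (\<Union>k\<in>{k\<in>I. lbl k \<noteq> lbl i}. B k)"
  have "Same \<inter> U = {} \<or> Other \<inter> U = {}"
  proof (rule connectedD)
    show "connected U" "open Same" "open Other"
      using conn opn unfolding U_def Same_def Other_def by auto
    show "U \<subseteq> Same \<union> Other"
      unfolding U_def Same_def Other_def by blast
    show "Same \<inter> Other \<inter> U = {}"
    proof (rule equals0I)
      fix z
      assume "z \<in> Same \<inter> Other \<inter> U"
      then obtain k l where "k \<in> I" "l \<in> I" "lbl k = lbl i" "lbl l \<noteq> lbl i" "z \<in> T \<inter> B k \<inter> B l"
        unfolding U_def Same_def Other_def by blast
      then show False
        using agree[of k l] by auto
    qed
  qed
  moreover have "T \<inter> B i \<subseteq> Same \<inter> U" "T \<inter> B j \<subseteq> Other \<inter> U"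
    using \<open>i \<in> I\<close> \<open>j \<in> I\<close> ne unfolding U_def Same_def Other_def by auto
  ultimately show False
    using nonempty \<open>i \<in> I\<close> \<open>j \<in> I\<close> by blast
qed

lemma perm_label_unique_if_close:
  fixes h \<rho> :: "'a::metric_space \<Rightarrow> real^'d"
  assumes "Lh-lipschitz_on A h" "L\<rho>-lipschitz_on A \<rho>" "a \<in> A" "b \<in> A"
    and "Q \<in> perm_matrices" "h b = Q *v \<rho> b"
    and sep: "\<forall>Q'\<in>perm_matrices. Q' \<noteq> P \<longrightarrow> \<gamma> \<le> norm (h a - Q' *v \<rho> a)"
    and close: "(Lh + L\<rho>) * dist a b < \<gamma>"
  shows "Q = P"
proof (rule ccontr)
  assume "Q \<noteq> P"
  then have "\<gamma> \<le> norm (h a - Q *v \<rho> a)"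
    using sep \<open>Q \<in> perm_matrices\<close> by blast
  moreover have "norm (h a - Q *v \<rho> a) \<le> (Lh + L\<rho>) * dist a b"
    by (rule perm_representation_error_le[OF assms(1-6)])
  ultimately show False
    using close by linarith
qed

theorem lemma5:
  fixes f :: "real^'d \<Rightarrow> real^'m"
    and P :: "(real^'d) measure"
    and S :: "(real^'d) set"
    and G :: "(real^'m \<Rightarrow> real^'d) set"
    and C :: real
    and ghat :: "real^'m \<Rightarrow> real^'d"
    and \<rho> :: "'d \<Rightarrow> real \<Rightarrow> real"
    and Pihat :: "real^'d \<Rightarrow> real^'d^'d"
    and N :: nat
    and s :: "nat \<Rightarrow> real^'d"
    and r :: "nat \<Rightarrow> real"
    and Lf Lg L\<rho> \<gamma> :: real
  assumes dim: "CARD('m) \<ge> CARD('d)"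
    and prob: "prob_space P" "sets P = sets borel"
    and supp: "S \<in> sets P" "emeasure P S = 1"
    and f_diff: "\<forall>z. f differentiable (at z)"
    and f_inj: "inj_on f S"
    and C_pos: "C > 0"
    and in_S: "\<forall>n\<in>{1..N}. s n \<in> S"
    and sdi: "\<forall>n\<in>{1..N}. SDI f (s n)"
    and opt: "jvolmax_optimal_encoder P f S G C ghat"
    and ghat_G: "ghat \<in> G"
    and \<rho>_inv: "\<forall>k. inj (\<rho> k)"
    and Pihat_perm: "\<forall>n\<in>{1..N}. Pihat (s n) \<in> perm_matrices"
    and repr: "\<forall>n\<in>{1..N}. ghat (f (s n)) = Pihat (s n) *v cw_map \<rho> (s n)"
    and Lpos: "Lf > 0" "Lg > 0" "L\<rho> > 0"
    and lip: "Lf-lipschitz_on UNIV f" "Lg-lipschitz_on UNIV ghat" "L\<rho>-lipschitz_on UNIV (cw_map \<rho>)"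
    and \<gamma>_pos: "\<gamma> > 0"
    and sep: "\<forall>n\<in>{1..N}. \<forall>Q\<in>perm_matrices. Q \<noteq> Pihat (s n) \<longrightarrow>
                 norm (ghat (f (s n)) - Q *v cw_map \<rho> (s n)) \<ge> \<gamma>"
    and r_pos: "\<forall>n\<in>{1..N}. 0 < r n"
    and r_small: "\<forall>n\<in>{1..N}. r n < \<gamma> / (2 * (Lf * Lg + L\<rho>))"
    and conn: "connected (\<Union>n\<in>{1..N}. {z\<in>S. norm (z - s n) < r n})"
  shows "\<exists>Q\<in>perm_matrices. (\<forall>n\<in>{1..N}. Pihat (s n) = Q) \<and>
           (\<forall>n\<in>{1..N}. ghat (f (s n)) = Q *v cw_map \<rho> (s n))"
proof -
  define K where "K = Lf * Lg + L\<rho>"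
  have K_pos: "K > 0"
    using Lpos unfolding K_def by (simp add: add_pos_pos)
  have lip_gf: "(Lf * Lg)-lipschitz_on UNIV (\<lambda>z. ghat (f z))"
    using lipschitz_on_compose2[OF lip(1) lipschitz_on_subset[OF lip(2)]] by (simp add: mult.commute)
  have agree: "Pihat (s n) = Pihat (s m)"
    if nm: "n \<in> {1..N}" "m \<in> {1..N}" and overlap: "S \<inter> ball (s m) (r m) \<inter> ball (s n) (r n) \<noteq> {}"
    for n m
  proof -
    obtain z where "dist (s m) z < r m" "dist (s n) z < r n"
      using overlap by auto
    then have "dist (s m) (s n) < r m + r n"
      by (rule dist_triangle_less_add)
    also have "\<dots> < \<gamma> / (2 * K) + \<gamma> / (2 * K)"
      using r_small nm unfolding K_def by (intro add_strict_mono) auto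
    finally have "K * dist (s m) (s n) < \<gamma>"
      using K_pos by (simp add: pos_less_divide_eq mult.commute)
    then show ?thesis
      unfolding K_def using Pihat_perm repr sep nm
      by (intro perm_label_unique_if_close[OF lip_gf lip(3) UNIV_I UNIV_I]) auto
  qed
  have nbhd: "{z\<in>S. norm (z - s n) < r n} = S \<inter> ball (s n) (r n)" for n
    by (auto simp: dist_norm norm_minus_commute)
  have const: "Pihat (s n) = Pihat (s 1)" if "n \<in> {1..N}" "1 \<in> {1..N}" for n
  proof (rule connected_Union_label_const[where I="{1..N}" and T=S and B="\<lambda>n. ball (s n) (r n)"])
    show "connected (\<Union>n\<in>{1..N}. S \<inter> ball (s n) (r n))"
      using conn by (simp only: nbhd)
    show "S \<inter> ball (s k) (r k) \<noteq> {}" if "k \<in> {1..N}" for k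
      using in_S r_pos that by (metis IntI centre_in_ball empty_iff)
  qed (use agree that in simp_all)
  show ?thesis
  proof (cases "N = 0")
    case True
    then show ?thesis
      using mat_1_in_perm_matrices by auto
  next
    case False
    then have one: "1 \<in> {1..N}"
      by simp
    have "ghat (f (s n)) = Pihat (s 1) *v cw_map \<rho> (s n)" if "n \<in> {1..N}" for n
      using repr const[OF that one] that by metis
    then show ?thesis
      using Pihat_perm const one by blast
  qed
qed

end
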